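(* Let $R$ be a commutative ring, $E$ a simple $R$-module, $D$ a finitely generated $R$-module and $M=E\oplus D$. The following are equivalent: (a) $E$ is strongly hollow in $M$; (b) every submodule $N$ of $M$ either contains $E$ or is contained in $D$; (c) $R=\mathrm{Ann}(E)+\mathrm{Ann}(D)$; (d) $\mathrm{Ann}(D)\not\subseteq\mathrm{Ann}(E)$.
   Context: A submodule $N$ of $M$ is strongly hollow in $M$ if for all submodules $K,L$ of $M$, $N\subseteq K+L$ implies $N\subseteq K$ or $N\subseteq L$. $\mathrm{Ann}(X)=\{r\in R\mid rX=0\}$. *)

theory Defs
  imports "HOL-Algebra.Algebra"
begin

text \<open>Submodules of M contained in a submodule E are exactly the submodules of E.\<close>

definition simple_submodule :: "('a, 'c) ring_scheme \<Rightarrow> ('a, 'b, 'd) module_scheme \<Rightarrow> 'b set \<Rightarrow> bool" where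
  "simple_submodule R M E \<longleftrightarrow> submodule E R M \<and> E \<noteq> {\<zero>\<^bsub>M\<^esub>} \<and>
     (\<forall>N. submodule N R M \<and> N \<subseteq> E \<longrightarrow> N = {\<zero>\<^bsub>M\<^esub>} \<or> N = E)"

definition generated_submodule :: "('a, 'c) ring_scheme \<Rightarrow> ('a, 'b, 'd) module_scheme \<Rightarrow> 'b set \<Rightarrow> 'b set" where
  "generated_submodule R M S = \<Inter>{N. submodule N R M \<and> S \<subseteq> N}"

definition finitely_generated_submodule :: "('a, 'c) ring_scheme \<Rightarrow> ('a, 'b, 'd) module_scheme \<Rightarrow> 'b set \<Rightarrow> bool" where
  "finitely_generated_submodule R M D \<longleftrightarrow> submodule D R M \<and>
     (\<exists>S. finite S \<and> S \<subseteq> D \<and> generated_submodule R M S = D)"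

definition strongly_hollow :: "('a, 'c) ring_scheme \<Rightarrow> ('a, 'b, 'd) module_scheme \<Rightarrow> 'b set \<Rightarrow> bool" where
  "strongly_hollow R M N \<longleftrightarrow>
     (\<forall>K L. submodule K R M \<and> submodule L R M \<and> N \<subseteq> K <+>\<^bsub>M\<^esub> L \<longrightarrow> N \<subseteq> K \<or> N \<subseteq> L)"

definition Ann :: "('a, 'c) ring_scheme \<Rightarrow> ('a, 'b, 'd) module_scheme \<Rightarrow> 'b set \<Rightarrow> 'a set" where
  "Ann R M S = {r. r \<in> carrier R \<and> (\<forall>x\<in>S. r \<odot>\<^bsub>M\<^esub> x = \<zero>\<^bsub>M\<^esub>)}"

end

theory Submission
  imports Defs
begin

text \<open>
  Every element outside \<open>D\<close> has a nonzero \<open>E\<close>-component \<open>e\<close>, and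
  \<open>E = R e\<close> because \<open>E\<close> is simple; this gives (a) \<open>\<Leftrightarrow>\<close> (b), and (c) \<open>\<Rightarrow>\<close> (b) since writing
  \<open>1 = a + b\<close> with \<open>a \<in> Ann E\<close>, \<open>b \<in> Ann D\<close>, multiplication by \<open>b\<close> projects \<open>M\<close> onto \<open>E\<close>.
  For (b) \<open>\<Rightarrow>\<close> (d), fix \<open>0 \<noteq> y \<in> E\<close>; for each \<open>x \<in> D\<close> the submodule \<open>R (y + x)\<close> is not
  inside \<open>D\<close>, so it contains \<open>y = r (y + x)\<close>, and comparing components \<open>r\<close> acts as the
  identity on \<open>E\<close> and kills \<open>x\<close>. The product of such \<open>r\<close> over finitely many generators
  of \<open>D\<close> lies in \<open>Ann D\<close> but not in \<open>Ann E\<close>. Finally, for (d) \<open>\<Rightarrow>\<close> (c), some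
  \<open>b \<in> Ann D\<close> acts nontrivially on \<open>E\<close>, so, \<open>E\<close> being simple, \<open>s b\<close> acts as the identity on \<open>E\<close>
  for some \<open>s\<close>, and \<open>1 = (1 - s b) + s b \<in> Ann E + Ann D\<close>.
\<close>

definition cyclic_submodule :: "('a, 'c) ring_scheme \<Rightarrow> ('a, 'b, 'd) module_scheme \<Rightarrow> 'b \<Rightarrow> 'b set" where
  "cyclic_submodule R M z = (\<lambda>a. a \<odot>\<^bsub>M\<^esub> z) ` carrier R"

lemma generated_submodule_least:
  "submodule N R M \<Longrightarrow> S \<subseteq> N \<Longrightarrow> generated_submodule R M S \<subseteq> N"
  unfolding generated_submodule_def by blast

context module
begin

lemma submodule_cyclic_submodule:
  assumes z: "z \<in> carrier M"
  shows "submodule (cyclic_submodule R M z) R M"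
  unfolding cyclic_submodule_def
proof (rule submoduleI)
  show "\<zero>\<^bsub>M\<^esub> \<in> (\<lambda>a. a \<odot>\<^bsub>M\<^esub> z) ` carrier R"
    using z by (metis R.zero_closed image_eqI smult_l_null)
qed (use z in \<open>auto simp: smult_l_minus[symmetric] smult_l_distr[symmetric] smult_assoc1[symmetric]\<close>)

lemma self_in_cyclic_submodule: "z \<in> carrier M \<Longrightarrow> z \<in> cyclic_submodule R M z"
  unfolding cyclic_submodule_def by (metis R.one_closed image_eqI smult_one)

lemma cyclic_submodule_subset:
  "submodule N R M \<Longrightarrow> z \<in> N \<Longrightarrow> cyclic_submodule R M z \<subseteq> N"
  unfolding cyclic_submodule_def using submoduleE(4) by blast

lemma submodule_set_add:
  assumes N: "submodule N R M" and L: "submodule L R M"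
  shows "submodule (N <+>\<^bsub>M\<^esub> L) R M"
proof (rule submoduleI)
  note N' = submoduleE[OF N] and L' = submoduleE[OF L]
  have mem: "n \<oplus>\<^bsub>M\<^esub> l \<in> N <+>\<^bsub>M\<^esub> L" if "n \<in> N" "l \<in> L" for n l
    using that unfolding set_add_def' by blast
  have elim: "\<exists>n\<in>N. \<exists>l\<in>L. a = n \<oplus>\<^bsub>M\<^esub> l" if "a \<in> N <+>\<^bsub>M\<^esub> L" for a
    using that unfolding set_add_def' by blast
  show "N <+>\<^bsub>M\<^esub> L \<subseteq> carrier M"
    using N'(1) L'(1) elim by blast
  have "\<zero>\<^bsub>M\<^esub> \<in> N" "\<zero>\<^bsub>M\<^esub> \<in> L"
    using N L submodule.axioms(1) subgroup.one_closed by fastforce+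
  then show "\<zero>\<^bsub>M\<^esub> \<in> N <+>\<^bsub>M\<^esub> L"
    using mem[of "\<zero>\<^bsub>M\<^esub>" "\<zero>\<^bsub>M\<^esub>"] by simp
  show "\<ominus>\<^bsub>M\<^esub> a \<in> N <+>\<^bsub>M\<^esub> L" if a: "a \<in> N <+>\<^bsub>M\<^esub> L" for a
  proof -
    obtain n l where "n \<in> N" "l \<in> L" "a = n \<oplus>\<^bsub>M\<^esub> l" using elim[OF a] by blast
    moreover have "n \<in> carrier M" "l \<in> carrier M" using calculation N'(1) L'(1) by blast+
    ultimately show ?thesis using mem N'(3) L'(3) by (simp add: M.minus_add)
  qed
  show "a \<oplus>\<^bsub>M\<^esub> b \<in> N <+>\<^bsub>M\<^esub> L" if a: "a \<in> N <+>\<^bsub>M\<^esub> L" and b: "b \<in> N <+>\<^bsub>M\<^esub> L" for a b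
  proof -
    obtain n l n' l' where nl: "n \<in> N" "l \<in> L" "n' \<in> N" "l' \<in> L"
      and ab: "a = n \<oplus>\<^bsub>M\<^esub> l" "b = n' \<oplus>\<^bsub>M\<^esub> l'"
      using elim[OF a] elim[OF b] by blast
    have "n \<in> carrier M" "l \<in> carrier M" "n' \<in> carrier M" "l' \<in> carrier M"
      using nl N'(1) L'(1) by blast+
    then have "a \<oplus>\<^bsub>M\<^esub> b = (n \<oplus>\<^bsub>M\<^esub> n') \<oplus>\<^bsub>M\<^esub> (l \<oplus>\<^bsub>M\<^esub> l')"
      unfolding ab by (simp add: M.a_ac)
    then show ?thesis using mem N'(5) L'(5) nl by simp
  qed
  show "c \<odot>\<^bsub>M\<^esub> a \<in> N <+>\<^bsub>M\<^esub> L" if c: "c \<in> carrier R" and a: "a \<in> N <+>\<^bsub>M\<^esub> L" for c a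
  proof -
    obtain n l where "n \<in> N" "l \<in> L" "a = n \<oplus>\<^bsub>M\<^esub> l" using elim[OF a] by blast
    moreover have "n \<in> carrier M" "l \<in> carrier M" using calculation N'(1) L'(1) by blast+
    ultimately show ?thesis using mem N'(4) L'(4) c by (simp add: smult_r_distr)
  qed
qed

lemma simple_submodule_eq_cyclic:
  assumes "simple_submodule R M E" and "y \<in> E" and "y \<noteq> \<zero>\<^bsub>M\<^esub>"
  shows "E = cyclic_submodule R M y"
proof -
  have E: "submodule E R M" using assms(1) unfolding simple_submodule_def by blast
  have y: "y \<in> carrier M" using submoduleE(1)[OF E] assms(2) by blast
  show ?thesis
    using assms submodule_cyclic_submodule[OF y] cyclic_submodule_subset[OF E assms(2)]
      self_in_cyclic_submodule[OF y]
    unfolding simple_submodule_def by blast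
qed

lemma simple_submodule_nontrivial:
  assumes "simple_submodule R M E"
  obtains y where "y \<in> E" and "y \<noteq> \<zero>\<^bsub>M\<^esub>"
proof -
  have "\<zero>\<^bsub>M\<^esub> \<in> E"
    using assms submodule.axioms(1) subgroup.one_closed unfolding simple_submodule_def by fastforce
  then show ?thesis using that assms unfolding simple_submodule_def by blast
qed

text \<open>Commutativity of \<open>R\<close> is what lets a scalar fixing one generator fix all of \<open>E\<close>.\<close>

lemma simple_submodule_fixed_by:
  assumes E: "simple_submodule R M E" and y: "y \<in> E" "y \<noteq> \<zero>\<^bsub>M\<^esub>"
    and r: "r \<in> carrier R" and ry: "r \<odot>\<^bsub>M\<^esub> y = y"
  shows "\<forall>z\<in>E. r \<odot>\<^bsub>M\<^esub> z = z"
proof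
  fix z assume "z \<in> E"
  then obtain a where a: "a \<in> carrier R" "z = a \<odot>\<^bsub>M\<^esub> y"
    using simple_submodule_eq_cyclic[OF E y] unfolding cyclic_submodule_def by blast
  have yc: "y \<in> carrier M"
    using E y submoduleE(1) unfolding simple_submodule_def by blast
  have "r \<odot>\<^bsub>M\<^esub> z = (r \<otimes>\<^bsub>R\<^esub> a) \<odot>\<^bsub>M\<^esub> y" using a r yc by (simp add: smult_assoc1)
  also have "\<dots> = (a \<otimes>\<^bsub>R\<^esub> r) \<odot>\<^bsub>M\<^esub> y" using a r by (simp add: R.m_comm)
  also have "\<dots> = z" using a r yc ry by (simp add: smult_assoc1)
  finally show "r \<odot>\<^bsub>M\<^esub> z = z" .
qed

lemma submodule_annihilated_by:
  assumes r: "r \<in> carrier R"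
  shows "submodule {w \<in> carrier M. r \<odot>\<^bsub>M\<^esub> w = \<zero>\<^bsub>M\<^esub>} R M"
proof (rule submoduleI)
  show "a \<odot>\<^bsub>M\<^esub> x \<in> {w \<in> carrier M. r \<odot>\<^bsub>M\<^esub> w = \<zero>\<^bsub>M\<^esub>}"
    if "a \<in> carrier R" "x \<in> {w \<in> carrier M. r \<odot>\<^bsub>M\<^esub> w = \<zero>\<^bsub>M\<^esub>}" for a x
  proof -
    have "r \<odot>\<^bsub>M\<^esub> (a \<odot>\<^bsub>M\<^esub> x) = (r \<otimes>\<^bsub>R\<^esub> a) \<odot>\<^bsub>M\<^esub> x"
      using that r by (simp add: smult_assoc1)
    also have "\<dots> = (a \<otimes>\<^bsub>R\<^esub> r) \<odot>\<^bsub>M\<^esub> x" using that r by (simp add: R.m_comm)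
    also have "\<dots> = \<zero>\<^bsub>M\<^esub>" using that r by (simp add: smult_assoc1)
    finally show ?thesis using that by simp
  qed
qed (use r in \<open>auto simp: smult_r_minus smult_r_distr\<close>)

lemma Ann_generated_submoduleI:
  assumes "r \<in> carrier R" and "\<forall>x\<in>S. r \<odot>\<^bsub>M\<^esub> x = \<zero>\<^bsub>M\<^esub>" and "S \<subseteq> carrier M"
  shows "r \<in> Ann R M (generated_submodule R M S)"
proof -
  have "generated_submodule R M S \<subseteq> {w \<in> carrier M. r \<odot>\<^bsub>M\<^esub> w = \<zero>\<^bsub>M\<^esub>}"
    using assms by (intro generated_submodule_least submodule_annihilated_by) auto
  then show ?thesis using assms(1) unfolding Ann_def by blast
qed

lemma Ann_l_closed:
  assumes "S \<subseteq> carrier M" and "r \<in> carrier R" and "a \<in> Ann R M S"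
  shows "r \<otimes>\<^bsub>R\<^esub> a \<in> Ann R M S"
  using assms unfolding Ann_def by (auto simp: smult_assoc1 subset_iff)

lemma Ann_sum_eq_carrier:
  assumes S: "S \<subseteq> carrier M" and T: "T \<subseteq> carrier M"
    and one: "\<one>\<^bsub>R\<^esub> \<in> Ann R M S <+>\<^bsub>R\<^esub> Ann R M T"
  shows "carrier R = Ann R M S <+>\<^bsub>R\<^esub> Ann R M T"
proof
  show "carrier R \<subseteq> Ann R M S <+>\<^bsub>R\<^esub> Ann R M T"
  proof
    fix r assume r: "r \<in> carrier R"
    obtain a b where ab: "a \<in> Ann R M S" "b \<in> Ann R M T" "\<one>\<^bsub>R\<^esub> = a \<oplus>\<^bsub>R\<^esub> b"
      using one unfolding set_add_def' by blast
    then have "a \<in> carrier R" "b \<in> carrier R" unfolding Ann_def by auto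
    then have "r = r \<otimes>\<^bsub>R\<^esub> a \<oplus>\<^bsub>R\<^esub> r \<otimes>\<^bsub>R\<^esub> b"
      using r ab(3) by (metis R.r_distr R.r_one)
    then show "r \<in> Ann R M S <+>\<^bsub>R\<^esub> Ann R M T"
      using Ann_l_closed[OF S r ab(1)] Ann_l_closed[OF T r ab(2)] unfolding set_add_def' by blast
  qed
qed (auto simp: set_add_def' Ann_def)

lemma one_minus_in_Ann:
  assumes "S \<subseteq> carrier M" and "r \<in> carrier R" and "\<forall>z\<in>S. r \<odot>\<^bsub>M\<^esub> z = z"
  shows "\<one>\<^bsub>R\<^esub> \<ominus>\<^bsub>R\<^esub> r \<in> Ann R M S"
  using assms unfolding Ann_def
  by (auto simp: R.minus_eq smult_l_distr smult_l_minus subset_iff M.r_neg)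

lemma finite_common_annihilator_fixing:
  assumes "finite S" and "S \<subseteq> carrier M" and "E \<subseteq> carrier M"
    and "\<And>x. x \<in> S \<Longrightarrow> \<exists>r\<in>carrier R. (\<forall>z\<in>E. r \<odot>\<^bsub>M\<^esub> z = z) \<and> r \<odot>\<^bsub>M\<^esub> x = \<zero>\<^bsub>M\<^esub>"
  shows "\<exists>r\<in>carrier R. (\<forall>z\<in>E. r \<odot>\<^bsub>M\<^esub> z = z) \<and> (\<forall>x\<in>S. r \<odot>\<^bsub>M\<^esub> x = \<zero>\<^bsub>M\<^esub>)"
  using assms
proof (induction S rule: finite_induct)
  case empty
  then show ?case by (intro bexI[of _ "\<one>\<^bsub>R\<^esub>"]) (auto simp: subset_iff)
next
  case (insert x F)
  then obtain r where r: "r \<in> carrier R" "\<forall>z\<in>E. r \<odot>\<^bsub>M\<^esub> z = z" "\<forall>w\<in>F. r \<odot>\<^bsub>M\<^esub> w = \<zero>\<^bsub>M\<^esub>"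
    by blast
  obtain t where t: "t \<in> carrier R" "\<forall>z\<in>E. t \<odot>\<^bsub>M\<^esub> z = z" "t \<odot>\<^bsub>M\<^esub> x = \<zero>\<^bsub>M\<^esub>"
    using insert.prems(3) by blast
  have "(r \<otimes>\<^bsub>R\<^esub> t) \<odot>\<^bsub>M\<^esub> x = \<zero>\<^bsub>M\<^esub>"
    using r t insert.prems(1) by (simp add: smult_assoc1)
  moreover have "(r \<otimes>\<^bsub>R\<^esub> t) \<odot>\<^bsub>M\<^esub> w = \<zero>\<^bsub>M\<^esub>" if "w \<in> F" for w
  proof -
    have "(r \<otimes>\<^bsub>R\<^esub> t) \<odot>\<^bsub>M\<^esub> w = (t \<otimes>\<^bsub>R\<^esub> r) \<odot>\<^bsub>M\<^esub> w" using r t by (simp add: R.m_comm)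
    also have "\<dots> = \<zero>\<^bsub>M\<^esub>"
      using that r t insert.prems(1) by (simp add: smult_assoc1 subset_iff)
    finally show ?thesis .
  qed
  moreover have "(r \<otimes>\<^bsub>R\<^esub> t) \<odot>\<^bsub>M\<^esub> z = z" if "z \<in> E" for z
    using that r t insert.prems(2) by (auto simp: smult_assoc1)
  ultimately show ?case
    using r(1) t(1) by (intro bexI[of _ "r \<otimes>\<^bsub>R\<^esub> t"]) auto
qed

end

locale simple_complemented = module R M for R M +
  fixes E D
  assumes simple_E: "simple_submodule R M E"
    and submodule_D: "submodule D R M"
    and inter_E_D: "E \<inter> D = {\<zero>\<^bsub>M\<^esub>}"
    and sum_E_D: "E <+>\<^bsub>M\<^esub> D = carrier M"
begin

lemma submodule_E: "submodule E R M"
  using simple_E unfolding simple_submodule_def by blast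

lemma E_carrier: "E \<subseteq> carrier M"
  using submoduleE(1)[OF submodule_E] .

lemma D_carrier: "D \<subseteq> carrier M"
  using submoduleE(1)[OF submodule_D] .

lemma E_not_subset_D: "\<not> E \<subseteq> D"
  using inter_E_D by (metis simple_E simple_submodule_nontrivial Int_absorb2 singletonD)

lemma outside_D_decomp:
  assumes "n \<in> carrier M" and "n \<notin> D"
  obtains e d where "e \<in> E" "e \<noteq> \<zero>\<^bsub>M\<^esub>" "d \<in> D" "n = e \<oplus>\<^bsub>M\<^esub> d"
proof -
  obtain e d where ed: "e \<in> E" "d \<in> D" "n = e \<oplus>\<^bsub>M\<^esub> d"
    using assms(1) sum_E_D unfolding set_add_def' by blast
  then have "e \<noteq> \<zero>\<^bsub>M\<^esub>" using assms(2) D_carrier by auto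
  then show ?thesis using that ed by blast
qed

lemma strongly_hollow_imp_dichotomy:
  assumes SH: "strongly_hollow R M E" and N: "submodule N R M"
  shows "E \<subseteq> N \<or> N \<subseteq> D"
proof (rule ccontr)
  assume "\<not> ?thesis"
  then obtain n where n: "n \<in> N" "n \<notin> D" "\<not> E \<subseteq> N" by blast
  have nc: "n \<in> carrier M" using n N submoduleE(1) by blast
  obtain e d where ed: "e \<in> E" "e \<noteq> \<zero>\<^bsub>M\<^esub>" "d \<in> D" "n = e \<oplus>\<^bsub>M\<^esub> d"
    using outside_D_decomp[OF nc n(2)] .
  have "e = n \<oplus>\<^bsub>M\<^esub> \<ominus>\<^bsub>M\<^esub> d"
    using ed E_carrier D_carrier by (simp add: M.add.m_assoc M.r_neg subset_iff)
  then have "e \<in> N <+>\<^bsub>M\<^esub> D"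
    using n(1) ed(3) submoduleE(3)[OF submodule_D] unfolding set_add_def' by blast
  then have "E \<subseteq> N <+>\<^bsub>M\<^esub> D"
    using simple_submodule_eq_cyclic[OF simple_E ed(1,2)]
      cyclic_submodule_subset[OF submodule_set_add[OF N submodule_D]] by simp
  then show False
    using SH N submodule_D n(3) E_not_subset_D unfolding strongly_hollow_def by blast
qed

lemma dichotomy_imp_strongly_hollow:
  assumes B: "\<forall>N. submodule N R M \<longrightarrow> E \<subseteq> N \<or> N \<subseteq> D"
  shows "strongly_hollow R M E"
  unfolding strongly_hollow_def
proof (intro allI impI)
  fix K L assume H: "submodule K R M \<and> submodule L R M \<and> E \<subseteq> K <+>\<^bsub>M\<^esub> L"
  show "E \<subseteq> K \<or> E \<subseteq> L"
  proof (rule ccontr)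
    assume "\<not> ?thesis"
    then have "K \<subseteq> D" and "L \<subseteq> D" using B H by blast+
    then have "K <+>\<^bsub>M\<^esub> L \<subseteq> D"
      using submoduleE(5)[OF submodule_D] unfolding set_add_def' by blast
    then show False using H E_not_subset_D by blast
  qed
qed

lemma Ann_comaximal_imp_dichotomy:
  assumes C: "carrier R = Ann R M E <+>\<^bsub>R\<^esub> Ann R M D" and N: "submodule N R M"
  shows "E \<subseteq> N \<or> N \<subseteq> D"
proof (rule ccontr)
  assume "\<not> ?thesis"
  then obtain n where n: "n \<in> N" "n \<notin> D" "\<not> E \<subseteq> N" by blast
  have nc: "n \<in> carrier M" using n N submoduleE(1) by blast
  obtain e d where ed: "e \<in> E" "e \<noteq> \<zero>\<^bsub>M\<^esub>" "d \<in> D" "n = e \<oplus>\<^bsub>M\<^esub> d"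
    using outside_D_decomp[OF nc n(2)] .
  have ec: "e \<in> carrier M" and dc: "d \<in> carrier M" using ed E_carrier D_carrier by auto
  obtain a b where ab: "a \<in> Ann R M E" "b \<in> Ann R M D" "\<one>\<^bsub>R\<^esub> = a \<oplus>\<^bsub>R\<^esub> b"
    using C R.one_closed unfolding set_add_def' by blast
  then have ar: "a \<in> carrier R" and br: "b \<in> carrier R" unfolding Ann_def by auto
  have "e = (a \<oplus>\<^bsub>R\<^esub> b) \<odot>\<^bsub>M\<^esub> e" using ab(3)[symmetric] ec by simp
  also have "\<dots> = b \<odot>\<^bsub>M\<^esub> e"
    using ab(1) ed(1) ar br ec unfolding Ann_def by (simp add: smult_l_distr)
  also have "\<dots> = b \<odot>\<^bsub>M\<^esub> n"
    using ab(2) ed(3,4) br ec dc unfolding Ann_def by (simp add: smult_r_distr)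
  finally have "e \<in> N" using br n(1) submoduleE(4)[OF N] by metis
  then have "E \<subseteq> N"
    using simple_submodule_eq_cyclic[OF simple_E ed(1,2)] cyclic_submodule_subset[OF N] by simp
  then show False using n(3) by blast
qed

lemma dichotomy_imp_fixing_annihilator:
  assumes B: "\<forall>N. submodule N R M \<longrightarrow> E \<subseteq> N \<or> N \<subseteq> D"
    and y: "y \<in> E" "y \<noteq> \<zero>\<^bsub>M\<^esub>" and x: "x \<in> D"
  shows "\<exists>r\<in>carrier R. (\<forall>z\<in>E. r \<odot>\<^bsub>M\<^esub> z = z) \<and> r \<odot>\<^bsub>M\<^esub> x = \<zero>\<^bsub>M\<^esub>"
proof -
  have yc: "y \<in> carrier M" and xc: "x \<in> carrier M" using y x E_carrier D_carrier by auto
  have "y \<oplus>\<^bsub>M\<^esub> x \<notin> D"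
  proof
    assume "y \<oplus>\<^bsub>M\<^esub> x \<in> D"
    then have "(y \<oplus>\<^bsub>M\<^esub> x) \<oplus>\<^bsub>M\<^esub> \<ominus>\<^bsub>M\<^esub> x \<in> D"
      using x submoduleE(3,5)[OF submodule_D] by blast
    then have "y \<in> D" using yc xc by (simp add: M.add.m_assoc M.r_neg)
    then show False using inter_E_D y by blast
  qed
  moreover have "y \<oplus>\<^bsub>M\<^esub> x \<in> cyclic_submodule R M (y \<oplus>\<^bsub>M\<^esub> x)"
    using self_in_cyclic_submodule yc xc by simp
  ultimately have "E \<subseteq> cyclic_submodule R M (y \<oplus>\<^bsub>M\<^esub> x)"
    using B submodule_cyclic_submodule[of "y \<oplus>\<^bsub>M\<^esub> x"] yc xc by auto
  then obtain r where "r \<in> carrier R" "y = r \<odot>\<^bsub>M\<^esub> (y \<oplus>\<^bsub>M\<^esub> x)"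
    using y(1) unfolding cyclic_submodule_def by blast
  then have r: "r \<in> carrier R" "y = r \<odot>\<^bsub>M\<^esub> y \<oplus>\<^bsub>M\<^esub> r \<odot>\<^bsub>M\<^esub> x"
    using yc xc by (simp_all add: smult_r_distr)
  then have "r \<odot>\<^bsub>M\<^esub> x = \<ominus>\<^bsub>M\<^esub> (r \<odot>\<^bsub>M\<^esub> y) \<oplus>\<^bsub>M\<^esub> y"
    using yc xc by (metis M.add.inv_solve_left smult_closed)
  moreover have "r \<odot>\<^bsub>M\<^esub> y \<in> E" using r(1) y(1) submoduleE(4)[OF submodule_E] by blast
  ultimately have "r \<odot>\<^bsub>M\<^esub> x \<in> E"
    using y(1) submoduleE(3,5)[OF submodule_E] by simp
  moreover have "r \<odot>\<^bsub>M\<^esub> x \<in> D" using r(1) x submoduleE(4)[OF submodule_D] by blast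
  ultimately have rx: "r \<odot>\<^bsub>M\<^esub> x = \<zero>\<^bsub>M\<^esub>" using inter_E_D by blast
  then have "r \<odot>\<^bsub>M\<^esub> y = y" using r yc by simp
  then show ?thesis using simple_submodule_fixed_by[OF simple_E y r(1)] r(1) rx by blast
qed

lemma dichotomy_imp_Ann_not_subset:
  assumes B: "\<forall>N. submodule N R M \<longrightarrow> E \<subseteq> N \<or> N \<subseteq> D"
    and fg: "finitely_generated_submodule R M D"
  shows "\<not> Ann R M D \<subseteq> Ann R M E"
proof
  assume sub: "Ann R M D \<subseteq> Ann R M E"
  obtain y where y: "y \<in> E" "y \<noteq> \<zero>\<^bsub>M\<^esub>" using simple_E simple_submodule_nontrivial by blast
  obtain S where S: "finite S" "S \<subseteq> D" "generated_submodule R M S = D"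
    using fg unfolding finitely_generated_submodule_def by blast
  obtain r where r: "r \<in> carrier R" "\<forall>z\<in>E. r \<odot>\<^bsub>M\<^esub> z = z" "\<forall>x\<in>S. r \<odot>\<^bsub>M\<^esub> x = \<zero>\<^bsub>M\<^esub>"
    using finite_common_annihilator_fixing[OF S(1) _ E_carrier] S(2) D_carrier
      dichotomy_imp_fixing_annihilator[OF B y] by blast
  then have "r \<in> Ann R M D"
    using Ann_generated_submoduleI S D_carrier by blast
  then have "r \<odot>\<^bsub>M\<^esub> y = \<zero>\<^bsub>M\<^esub>" using sub y(1) unfolding Ann_def by blast
  then show False using r(2) y by simp
qed

lemma Ann_not_subset_imp_comaximal:
  assumes "\<not> Ann R M D \<subseteq> Ann R M E"
  shows "carrier R = Ann R M E <+>\<^bsub>R\<^esub> Ann R M D"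
proof -
  obtain b where b: "b \<in> Ann R M D" "b \<notin> Ann R M E" using assms by blast
  have br: "b \<in> carrier R" using b unfolding Ann_def by auto
  then obtain z where z: "z \<in> E" "b \<odot>\<^bsub>M\<^esub> z \<noteq> \<zero>\<^bsub>M\<^esub>" using b unfolding Ann_def by auto
  have zc: "z \<in> carrier M" using z E_carrier by auto
  have "b \<odot>\<^bsub>M\<^esub> z \<in> E" using br z submoduleE(4)[OF submodule_E] by blast
  then obtain s where s: "s \<in> carrier R" "z = s \<odot>\<^bsub>M\<^esub> (b \<odot>\<^bsub>M\<^esub> z)"
    using simple_submodule_eq_cyclic[OF simple_E _ z(2)] z(1) unfolding cyclic_submodule_def by blast
  then have "(s \<otimes>\<^bsub>R\<^esub> b) \<odot>\<^bsub>M\<^esub> z = z" using br zc by (simp add: smult_assoc1)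
  then have fix_E: "\<forall>w\<in>E. (s \<otimes>\<^bsub>R\<^esub> b) \<odot>\<^bsub>M\<^esub> w = w"
    using simple_submodule_fixed_by[OF simple_E z(1)] z br s(1) by force
  have "\<one>\<^bsub>R\<^esub> = (\<one>\<^bsub>R\<^esub> \<ominus>\<^bsub>R\<^esub> s \<otimes>\<^bsub>R\<^esub> b) \<oplus>\<^bsub>R\<^esub> s \<otimes>\<^bsub>R\<^esub> b"
    using s(1) br by algebra
  moreover have "\<one>\<^bsub>R\<^esub> \<ominus>\<^bsub>R\<^esub> s \<otimes>\<^bsub>R\<^esub> b \<in> Ann R M E"
    using one_minus_in_Ann[OF E_carrier _ fix_E] s(1) br by simp
  moreover have "s \<otimes>\<^bsub>R\<^esub> b \<in> Ann R M D"
    using Ann_l_closed[OF D_carrier s(1) b(1)] .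
  ultimately show ?thesis
    using Ann_sum_eq_carrier[OF E_carrier D_carrier] unfolding set_add_def' by blast
qed

end

theorem lemma2p17:
  fixes R :: "('a, 'c) ring_scheme" and M :: "('a, 'b, 'd) module_scheme"
    and E D :: "'b set"
  assumes "module R M"
    and "simple_submodule R M E"
    and "finitely_generated_submodule R M D"
    and "E \<inter> D = {\<zero>\<^bsub>M\<^esub>}"
    and "E <+>\<^bsub>M\<^esub> D = carrier M"
  shows "(strongly_hollow R M E \<longleftrightarrow>
            (\<forall>N. submodule N R M \<longrightarrow> E \<subseteq> N \<or> N \<subseteq> D))
       \<and> ((\<forall>N. submodule N R M \<longrightarrow> E \<subseteq> N \<or> N \<subseteq> D) \<longleftrightarrow>
            carrier R = Ann R M E <+>\<^bsub>R\<^esub> Ann R M D)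
       \<and> (carrier R = Ann R M E <+>\<^bsub>R\<^esub> Ann R M D \<longleftrightarrow>
            \<not> Ann R M D \<subseteq> Ann R M E)"
proof -
  interpret simple_complemented R M E D
    using assms unfolding finitely_generated_submodule_def
    by (simp add: simple_complemented_def simple_complemented_axioms_def)
  show ?thesis
    using strongly_hollow_imp_dichotomy dichotomy_imp_strongly_hollow
      Ann_comaximal_imp_dichotomy dichotomy_imp_Ann_not_subset[OF _ assms(3)]
      Ann_not_subset_imp_comaximal
    by blast
qed

end
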